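(* Let $n\ge1$ and let $p_1,\dots,p_{2n}\in E=\mathbb C/\Lambda$ be distinct. Then, as an identity of functions of $(p_1,\dots,p_{2n})$, $$\sum_{i=1}^{2n}(-1)^i\wp_i=2\Big(\sum_{\substack{i<j\\ i,j\text{ even}}}\wp_{ij}-\sum_{\substack{i<j\\ i,j\text{ odd}}}\wp_{ij}\Big)=\sum_{i=1}^{2n}(-1)^i\hat\zeta_i^{\,2}.$$
   Context: $\wp_{ij}=\wp(p_i-p_j)$, $\zeta_{ij}=\zeta(p_i-p_j)$ for $i\ne j$, with the convention $\wp_{ii}=\zeta_{ii}=0$; $\wp_i=\sum_{j}\wp_{ij}$; $\hat\zeta_{ij}=(-1)^j\zeta_{ij}$ and $\hat\zeta_i=\sum_{j=1}^{2n}\hat\zeta_{ij}$. Here $\wp,\zeta$ are the Weierstrass functions of $\Lambda$. *)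

theory Defs
  imports "HOL-Analysis.Analysis"
begin

definition lattice :: "complex \<Rightarrow> complex \<Rightarrow> complex set" where
  "lattice \<omega>1 \<omega>2 = {of_int m * \<omega>1 + of_int k * \<omega>2 | m k. True}"

text \<open>Weierstrass wp-function of a lattice L (absolutely convergent, hence unconditional sum).\<close>
definition weierstrass_p :: "complex set \<Rightarrow> complex \<Rightarrow> complex" where
  "weierstrass_p L z = 1 / z\<^sup>2 + infsum (\<lambda>w. 1 / (z - w)\<^sup>2 - 1 / w\<^sup>2) (L - {0})"

definition weierstrass_zeta :: "complex set \<Rightarrow> complex \<Rightarrow> complex" where
  "weierstrass_zeta L z = 1 / z + infsum (\<lambda>w. 1 / (z - w) + 1 / w + z / w\<^sup>2) (L - {0})"

definition wp_ij :: "complex set \<Rightarrow> (nat \<Rightarrow> complex) \<Rightarrow> nat \<Rightarrow> nat \<Rightarrow> complex" where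
  "wp_ij L p i j = (if i = j then 0 else weierstrass_p L (p i - p j))"

definition zeta_ij :: "complex set \<Rightarrow> (nat \<Rightarrow> complex) \<Rightarrow> nat \<Rightarrow> nat \<Rightarrow> complex" where
  "zeta_ij L p i j = (if i = j then 0 else weierstrass_zeta L (p i - p j))"

definition wp_i :: "complex set \<Rightarrow> nat \<Rightarrow> (nat \<Rightarrow> complex) \<Rightarrow> nat \<Rightarrow> complex" where
  "wp_i L n p i = (\<Sum>j=1..2*n. wp_ij L p i j)"

definition zeta_hat_ij :: "complex set \<Rightarrow> (nat \<Rightarrow> complex) \<Rightarrow> nat \<Rightarrow> nat \<Rightarrow> complex" where
  "zeta_hat_ij L p i j = (-1) ^ j * zeta_ij L p i j"

definition zeta_hat_i :: "complex set \<Rightarrow> nat \<Rightarrow> (nat \<Rightarrow> complex) \<Rightarrow> nat \<Rightarrow> complex" where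
  "zeta_hat_i L n p i = (\<Sum>j=1..2*n. zeta_hat_ij L p i j)"

end

theory Submission
  imports Defs "HOL-Complex_Analysis.Complex_Analysis"
begin

text \<open>
  Write \<open>s i = (-1)^i\<close>. The first identity only uses that \<open>\<wp>\<^sub>i\<^sub>j\<close> is symmetric with zero
  diagonal: the alternating sum of its row sums is the sum of \<open>(s i + s j) \<wp>\<^sub>i\<^sub>j\<close> over
  \<open>i < j\<close>, and \<open>s i + s j\<close> is \<open>2\<close>, \<open>-2\<close> or \<open>0\<close> according as \<open>i, j\<close> are both even,
  both odd, or of mixed parity.

  The second identity rests on the Frobenius--Stickelberger addition formula
  \<open>(\<zeta> a + \<zeta> b - \<zeta> (a + b))\<^sup>2 = \<wp> a + \<wp> b + \<wp> (a + b)\<close>. Expanding the squares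
  \<open>(\<Sum>\<^sub>j s j \<zeta>\<^sub>i\<^sub>j)\<^sup>2\<close> gives a diagonal part \<open>\<Sum> s i \<zeta>\<^sub>i\<^sub>j\<^sup>2\<close> and a sum over triples of distinct
  indices. After cyclic symmetrisation the addition formula turns the products of \<open>\<zeta>\<close>'s in
  the latter into \<open>(\<zeta>\<^sub>i\<^sub>j\<^sup>2 - \<wp>\<^sub>i\<^sub>j) / 2\<close>, and summing out the third index with
  \<open>\<Sum>\<^sub>k s k = 0\<close> cancels the diagonal part, leaving the alternating sum of the \<open>\<wp>\<^sub>i\<close>.

  The addition formula itself follows from Liouville's theorem: as a function of \<open>a\<close>, the
  difference of its two sides is \<open>\<Lambda>\<close>-periodic, holomorphic off \<open>\<Lambda> \<union> (\<Lambda> - b)\<close>, and tends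
  to \<open>0\<close> at these points because the Laurent expansions of \<open>\<zeta>\<close> and \<open>\<wp>\<close> at the origin cancel
  in it. So it extends to a bounded entire function that vanishes on \<open>\<Lambda>\<close>.
\<close>

section \<open>Analytic preliminaries\<close>

lemma summable_on_int_powr:
  fixes s :: real
  assumes "s > 1"
  shows "(\<lambda>m::int. (1 + \<bar>of_int m\<bar>) powr - s) summable_on UNIV"
proof -
  have "summable (\<lambda>n. real n powr - s)"
    using assms by (simp add: summable_real_powr_iff)
  then have "summable (\<lambda>n. real (Suc n) powr - s)"
    by (subst summable_Suc_iff)
  then have nat: "(\<lambda>n. (1 + real n) powr - s) summable_on UNIV"
    by (subst summable_on_UNIV_nonneg_real_iff) (auto simp: add.commute)
  have "(\<lambda>m::int. (1 + \<bar>of_int m\<bar>) powr - s) summable_on range f"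
    if "f = int \<or> f = (\<lambda>n. - int n)" for f
    using that nat by (subst summable_on_reindex) (auto simp: inj_on_def o_def)
  moreover have "(UNIV :: int set) = range int \<union> range (\<lambda>n. - int n)"
    by (auto intro: int_cases2)
  ultimately show ?thesis
    using summable_on_union by metis
qed

lemma powr_three_halves_pair_le:
  fixes m k :: int
  assumes "(m, k) \<noteq> (0, 0)"
  shows "((1 + \<bar>real_of_int m\<bar>) * (1 + \<bar>real_of_int k\<bar>)) powr (3/2)
           \<le> 8 * (\<bar>real_of_int m\<bar> + \<bar>real_of_int k\<bar>) ^ 3"
proof -
  define u :: real where "u = \<bar>of_int m\<bar> + \<bar>of_int k\<bar>"
  have u: "u \<ge> 1"
    using assms unfolding u_def by (cases "m = 0") auto
  have "(1 + \<bar>of_int m\<bar>) * (1 + \<bar>of_int k\<bar>) \<le> (2 * u) * (2 * u)"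
    using u by (intro mult_mono) (auto simp: u_def)
  then have "((1 + \<bar>of_int m\<bar>) * (1 + \<bar>of_int k\<bar>)) powr (3/2) \<le> ((2 * u) powr 2) powr (3/2)"
    using u by (intro powr_mono2) (auto simp: powr_numeral power2_eq_square)
  also have "\<dots> = (2 * u) powr 3"
    by (simp add: powr_powr)
  also have "\<dots> = 8 * u ^ 3"
    using u by (simp add: powr_numeral power_mult_distrib)
  finally show ?thesis
    unfolding u_def .
qed

lemma inverse_cube_le_powr_pair:
  fixes m k :: int and c N :: real
  assumes "(m, k) \<noteq> (0, 0)" "c > 0" "c * (\<bar>real_of_int m\<bar> + \<bar>real_of_int k\<bar>) \<le> N"
  shows "1 / N ^ 3 \<le> 8 / c ^ 3 * ((1 + \<bar>real_of_int m\<bar>) * (1 + \<bar>real_of_int k\<bar>)) powr - (3/2)"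
proof -
  define u :: real where "u = \<bar>of_int m\<bar> + \<bar>of_int k\<bar>"
  have u: "u \<ge> 1"
    using assms(1) unfolding u_def by (cases "m = 0") auto
  have "1 / N ^ 3 \<le> 1 / (c * u) ^ 3"
    using assms(2,3) u by (intro frac_le power_mono) (auto simp: u_def)
  also have "\<dots> = 8 / c ^ 3 * (1 / (8 * u ^ 3))"
    using assms(2) u by (simp add: power_mult_distrib)
  also have "\<dots> \<le> 8 / c ^ 3 * (1 / ((1 + \<bar>of_int m\<bar>) * (1 + \<bar>of_int k\<bar>)) powr (3/2))"
    using powr_three_halves_pair_le[OF assms(1)] assms(2)
    by (intro mult_left_mono frac_le) (auto simp: u_def)
  finally show ?thesis
    by (simp add: powr_minus_divide)
qed

lemma summable_on_int_pair_powr: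
  "(\<lambda>(m, k). ((1 + \<bar>real_of_int m\<bar>) * (1 + \<bar>real_of_int k\<bar>)) powr - (3/2))
     summable_on (UNIV :: (int \<times> int) set)"
proof -
  define a :: "int \<Rightarrow> real" where "a m = (1 + \<bar>of_int m\<bar>) powr - (3/2)" for m
  have a: "a summable_on UNIV"
    unfolding a_def by (rule summable_on_int_powr) simp
  have "(\<lambda>(m, k). a m * a k) summable_on Sigma UNIV (\<lambda>_. UNIV)"
  proof (rule summable_on_SigmaI[where g = "\<lambda>m. a m * infsum a UNIV"])
    show "((\<lambda>k. case (m, k) of (m, k) \<Rightarrow> a m * a k) has_sum a m * infsum a UNIV) UNIV" for m
      using has_sum_cmult_right[OF has_sum_infsum[OF a]] by simp
    show "(\<lambda>m. a m * infsum a UNIV) summable_on UNIV"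
      using a by (rule summable_on_cmult_left)
  qed (auto simp: a_def)
  then show ?thesis
    by (simp add: a_def powr_mult case_prod_unfold)
qed

lemma has_sum_diff:
  fixes f g :: "'a \<Rightarrow> 'b :: topological_ab_group_add"
  assumes "(f has_sum a) A" "(g has_sum b) A"
  shows "((\<lambda>x. f x - g x) has_sum a - b) A"
proof -
  have "((\<lambda>x. - g x) has_sum - b) A"
    using assms(2) by (simp add: has_sum_uminus)
  from has_sum_add[OF assms(1) this] show ?thesis
    by simp
qed

lemma has_field_derivative_infsum:
  fixes f f' :: "'a \<Rightarrow> complex \<Rightarrow> complex" and M :: "'a \<Rightarrow> real"
  assumes y: "y \<in> ball c r"
    and deriv: "\<And>w y. w \<in> A \<Longrightarrow> y \<in> cball c r \<Longrightarrow> (f w has_field_derivative f' w y) (at y)"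
    and bound: "\<And>w y. w \<in> A \<Longrightarrow> y \<in> cball c r \<Longrightarrow> norm (f w y) \<le> M w"
    and M: "M summable_on A"
    and f': "(\<lambda>w. f' w y) summable_on A"
  shows "((\<lambda>y. \<Sum>\<^sub>\<infinity>w\<in>A. f w y) has_field_derivative (\<Sum>\<^sub>\<infinity>w\<in>A. f' w y)) (at y)"
proof -
  define F where "F = finite_subsets_at_top A"
  have "r > 0"
    using y by (simp add: dist_norm) (meson norm_ge_zero le_less_trans)
  have ev: "eventually (\<lambda>X. continuous_on (cball c r) (\<lambda>y. \<Sum>w\<in>X. f w y) \<and>
      (\<forall>y\<in>ball c r. ((\<lambda>y. \<Sum>w\<in>X. f w y) has_field_derivative (\<Sum>w\<in>X. f' w y)) (at y))) F"
    unfolding F_def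
  proof (rule eventually_finite_subsets_at_top_weakI, intro conjI ballI)
    fix X assume X: "finite X" "X \<subseteq> A"
    show "continuous_on (cball c r) (\<lambda>y. \<Sum>w\<in>X. f w y)"
      using X deriv by (intro continuous_on_sum continuous_at_imp_continuous_on ballI DERIV_isCont) blast+
    show "((\<lambda>y. \<Sum>w\<in>X. f w y) has_field_derivative (\<Sum>w\<in>X. f' w y)) (at y)" if "y \<in> ball c r" for y
      using X deriv that by (intro DERIV_sum) auto
  qed
  have ul: "uniform_limit (cball c r) (\<lambda>X y. \<Sum>w\<in>X. f w y) (\<lambda>y. \<Sum>\<^sub>\<infinity>w\<in>A. f w y) F"
    unfolding F_def using bound M by (rule Weierstrass_m_test_general)
  have F: "\<not> trivial_limit F"
    by (simp add: F_def)
  obtain g' where g': "\<And>y. y \<in> ball c r \<Longrightarrow>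
      ((\<lambda>y. \<Sum>\<^sub>\<infinity>w\<in>A. f w y) has_field_derivative g' y) (at y) \<and> ((\<lambda>X. \<Sum>w\<in>X. f' w y) \<longlongrightarrow> g' y) F"
    using has_complex_derivative_uniform_limit[OF ev ul F \<open>r > 0\<close>] by blast
  have "((\<lambda>X. \<Sum>w\<in>X. f' w y) \<longlongrightarrow> (\<Sum>\<^sub>\<infinity>w\<in>A. f' w y)) F"
    using f' unfolding F_def by (simp add: has_sum_def[symmetric] has_sum_infsum)
  with g'[OF y] F have "g' y = (\<Sum>\<^sub>\<infinity>w\<in>A. f' w y)"
    using tendsto_unique by blast
  with g'[OF y] show ?thesis
    by simp
qed

lemma sparse_in_UNIV_punctured_ball:
  assumes "B sparse_in UNIV"
  obtains e where "e > 0" "ball z e - {z} \<subseteq> - B"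
proof -
  have "\<not> z islimpt B"
    using assms unfolding sparse_in_ball_def by (metis UNIV_I centre_in_ball)
  then obtain e where "e > 0" "\<And>b. b \<in> B \<Longrightarrow> b \<noteq> z \<Longrightarrow> e \<le> dist b z"
    unfolding islimpt_approachable by (auto simp: not_less)
  with that show ?thesis
    by (force simp: dist_commute)
qed

lemma holomorphic_on_UNIV_if_tendsto_0_at_sparse:
  fixes f :: "complex \<Rightarrow> complex"
  assumes B: "B sparse_in UNIV"
    and holo: "f holomorphic_on - B"
    and lim: "\<And>b. b \<in> B \<Longrightarrow> (f \<longlongrightarrow> 0) (at b)"
  shows "(\<lambda>z. if z \<in> B then 0 else f z) holomorphic_on UNIV"
proof -
  define F where "F z = (if z \<in> B then 0 else f z)" for z
  have "\<exists>e>0. F holomorphic_on ball z0 e" for z0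
  proof -
    obtain e where e: "e > 0" and isolated: "ball z0 e - {z0} \<subseteq> - B"
      using sparse_in_UNIV_punctured_ball[OF B] by blast
    have sub: "ball z0 e - (B \<inter> {z0}) \<subseteq> - B"
      using isolated by blast
    then have holo_punctured: "F holomorphic_on ball z0 e - (B \<inter> {z0})"
      by (rule holomorphic_transform[where f = f, OF holomorphic_on_subset[OF holo]])
        (use sub in \<open>auto simp: F_def\<close>)
    have lim_centre: "(F \<longlongrightarrow> F z) (at z within ball z0 e)" if "z \<in> B \<inter> {z0}" for z
    proof -
      have "eventually (\<lambda>y. y \<in> ball z0 e - {z0}) (at z0)"
        using e by (intro eventually_at_in_open) auto
      then have "eventually (\<lambda>y. f y = F y) (at z0)"
        by eventually_elim (use isolated in \<open>auto simp: F_def\<close>)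
      with lim[of z0] that have "(F \<longlongrightarrow> F z) (at z)"
        by (auto simp: F_def intro: Lim_transform_eventually)
      then show ?thesis
        by (rule tendsto_within_subset) simp
    qed
    have "F holomorphic_on ball z0 e"
      by (rule no_isolated_singularity'[OF lim_centre holo_punctured]) auto
    with e show ?thesis
      by blast
  qed
  then have "F analytic_on UNIV"
    by (simp add: analytic_on_def)
  then show ?thesis
    unfolding F_def [abs_def] by (rule analytic_imp_holomorphic)
qed

definition wp_term :: "complex \<Rightarrow> complex \<Rightarrow> complex" where
  "wp_term z w = 1 / (z - w)\<^sup>2 - 1 / w\<^sup>2"

definition zeta_term :: "complex \<Rightarrow> complex \<Rightarrow> complex" where
  "zeta_term z w = 1 / (z - w) + 1 / w + z / w\<^sup>2"

text \<open>Since \<open>1 / 0 = 0\<close>, the summands at \<open>w = 0\<close> are the principal parts \<open>1 / z\<^sup>2\<close> and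
  \<open>1 / z\<close>: below, \<open>\<wp>\<close> and \<open>\<zeta>\<close> become sums over the whole lattice, and no lemma about
  the summands needs to exclude \<open>w = 0\<close>.\<close>

lemma weierstrass_p_eq: "weierstrass_p L z = 1 / z\<^sup>2 + (\<Sum>\<^sub>\<infinity>w\<in>L - {0}. wp_term z w)"
  by (simp add: weierstrass_p_def wp_term_def)

lemma weierstrass_zeta_eq: "weierstrass_zeta L z = 1 / z + (\<Sum>\<^sub>\<infinity>w\<in>L - {0}. zeta_term z w)"
  by (simp add: weierstrass_zeta_def zeta_term_def)

lemma wp_term_0_left [simp]: "wp_term 0 = (\<lambda>_. 0)"
  by (simp add: fun_eq_iff wp_term_def)

lemma zeta_term_0_left [simp]: "zeta_term 0 = (\<lambda>_. 0)"
  by (simp add: fun_eq_iff zeta_term_def)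

lemma norm_wp_term_le:
  assumes "w \<noteq> 0" "2 * norm z \<le> norm w"
  shows "norm (wp_term z w) \<le> 10 * norm z / norm w ^ 3"
proof -
  have w: "norm w > 0"
    using assms by simp
  have zw: "norm (z - w) \<ge> norm w / 2"
    using norm_triangle_ineq2[of w z] assms by (simp add: norm_minus_commute)
  then have "z - w \<noteq> 0"
    using w by auto
  then have "wp_term z w = (w\<^sup>2 - (z - w)\<^sup>2) / ((z - w)\<^sup>2 * w\<^sup>2)"
    using assms by (simp add: wp_term_def field_simps)
  also have "w\<^sup>2 - (z - w)\<^sup>2 = z * (2 * w - z)"
    by (simp add: power2_eq_square algebra_simps)
  finally have "wp_term z w = z * (2 * w - z) / ((z - w)\<^sup>2 * w\<^sup>2)" .
  then have "norm (wp_term z w) = norm z * norm (2 * w - z) / (norm (z - w) ^ 2 * norm w ^ 2)"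
    by (simp add: norm_mult norm_divide norm_power)
  also have "\<dots> \<le> norm z * (5/2 * norm w) / ((norm w / 2) ^ 2 * norm w ^ 2)"
  proof (rule frac_le)
    show "norm z * norm (2 * w - z) \<le> norm z * (5/2 * norm w)"
      using norm_triangle_ineq4[of "2 * w" z] assms by (intro mult_left_mono) (auto simp: norm_mult)
    show "(norm w / 2) ^ 2 * norm w ^ 2 \<le> norm (z - w) ^ 2 * norm w ^ 2"
      using zw w by (intro mult_right_mono power_mono) auto
  qed (use w in auto)
  also have "\<dots> = 10 * norm z / norm w ^ 3"
    using w by (simp add: field_simps power2_eq_square power3_eq_cube)
  finally show ?thesis .
qed

lemma norm_zeta_term_le:
  assumes "w \<noteq> 0" "2 * norm z \<le> norm w"
  shows "norm (zeta_term z w) \<le> 2 * norm z ^ 2 / norm w ^ 3"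
proof -
  have w: "norm w > 0"
    using assms by simp
  have zw: "norm (z - w) \<ge> norm w / 2"
    using norm_triangle_ineq2[of w z] assms by (simp add: norm_minus_commute)
  then have "z - w \<noteq> 0"
    using w by auto
  then have "zeta_term z w = z\<^sup>2 / (w\<^sup>2 * (z - w))"
    using assms by (simp add: zeta_term_def field_simps power2_eq_square)
  then have "norm (zeta_term z w) = norm z ^ 2 / (norm w ^ 2 * norm (z - w))"
    by (simp add: norm_mult norm_divide norm_power)
  also have "\<dots> \<le> norm z ^ 2 / (norm w ^ 2 * (norm w / 2))"
    using zw w by (intro divide_left_mono mult_left_mono mult_pos_pos) auto
  also have "\<dots> = 2 * norm z ^ 2 / norm w ^ 3"
    using w by (simp add: field_simps power2_eq_square power3_eq_cube)
  finally show ?thesis .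
qed

lemma has_field_derivative_zeta_term:
  assumes "y \<noteq> w"
  shows "((\<lambda>y. zeta_term y w) has_field_derivative - wp_term y w) (at y)"
proof (cases "w = 0")
  case True
  with assms show ?thesis
    by (auto intro!: derivative_eq_intros simp: zeta_term_def wp_term_def power2_eq_square)
next
  case False
  with assms show ?thesis
    unfolding zeta_term_def [abs_def] wp_term_def
    by (auto intro!: derivative_eq_intros simp: power2_eq_square field_simps)
qed

section \<open>Period lattices and their Weierstrass functions\<close>

locale period_lattice =
  fixes \<omega>1 \<omega>2 :: complex
  assumes independent: "Im (\<omega>2 / \<omega>1) \<noteq> 0"
begin

abbreviation \<Lambda> :: "complex set" where "\<Lambda> \<equiv> lattice \<omega>1 \<omega>2"

lemma period1_nonzero: "\<omega>1 \<noteq> 0"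
  using independent by auto

lemma mem_lattice_iff: "w \<in> \<Lambda> \<longleftrightarrow> (\<exists>m k. w = of_int m * \<omega>1 + of_int k * \<omega>2)"
  by (auto simp: lattice_def)

lemma lattice_combination: "of_int m * \<omega>1 + of_int k * \<omega>2 \<in> \<Lambda>"
  unfolding mem_lattice_iff by blast

lemma zero_in_lattice [simp]: "0 \<in> \<Lambda>"
  using lattice_combination[of 0 0] by simp

lemma lattice_add:
  assumes "a \<in> \<Lambda>" "b \<in> \<Lambda>" shows "a + b \<in> \<Lambda>"
proof -
  obtain m k m' k' where "a = of_int m * \<omega>1 + of_int k * \<omega>2" "b = of_int m' * \<omega>1 + of_int k' * \<omega>2"
    using assms by (auto simp: mem_lattice_iff)
  then have "a + b = of_int (m + m') * \<omega>1 + of_int (k + k') * \<omega>2"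
    by (simp add: algebra_simps)
  then show ?thesis by (metis lattice_combination)
qed

lemma lattice_uminus_iff [simp]: "- a \<in> \<Lambda> \<longleftrightarrow> a \<in> \<Lambda>"
proof -
  have "- a \<in> \<Lambda>" if a: "a \<in> \<Lambda>" for a
  proof -
    obtain m k where "a = of_int m * \<omega>1 + of_int k * \<omega>2"
      using a by (auto simp: mem_lattice_iff)
    then have "- a = of_int (- m) * \<omega>1 + of_int (- k) * \<omega>2"
      by (simp add: algebra_simps)
    then show ?thesis by (metis lattice_combination)
  qed
  from this[of a] this[of "- a"] show ?thesis by auto
qed

lemma lattice_diff: "a \<in> \<Lambda> \<Longrightarrow> b \<in> \<Lambda> \<Longrightarrow> a - b \<in> \<Lambda>"
  using lattice_add[of a "- b"] by simp

lemma lattice_add_right_iff: "b \<in> \<Lambda> \<Longrightarrow> a + b \<in> \<Lambda> \<longleftrightarrow> a \<in> \<Lambda>"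
  using lattice_diff[of "a + b" b] lattice_add[of a b] by auto

lemma lattice_translate_eq: "\<omega> \<in> \<Lambda> \<Longrightarrow> (\<lambda>u. u + \<omega>) ` \<Lambda> = \<Lambda>"
  by (auto simp: lattice_add_right_iff intro!: image_eqI[where x = "_ - \<omega>"] lattice_diff)

lemma lattice_uminus_eq: "uminus ` \<Lambda> = \<Lambda>"
  by (auto intro!: image_eqI[where x = "- _"])

lemma ex_real_coordinates: "\<exists>a b::real. z = of_real a * \<omega>1 + of_real b * \<omega>2"
proof -
  define \<tau> where "\<tau> = \<omega>2 / \<omega>1"
  define q where "q = z / \<omega>1"
  define b where "b = Im q / Im \<tau>"
  define a where "a = Re q - b * Re \<tau>"
  have "Im \<tau> \<noteq> 0"
    using independent by (simp add: \<tau>_def)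
  then have "q = of_real a + of_real b * \<tau>"
    by (simp add: complex_eq_iff a_def b_def)
  then have "z = of_real a * \<omega>1 + of_real b * \<omega>2"
    using period1_nonzero by (simp add: q_def \<tau>_def field_simps)
  then show ?thesis by blast
qed

lemma norm_combination_lower_bound:
  obtains c where "c > 0" "\<And>a b::real. c * (\<bar>a\<bar> + \<bar>b\<bar>) \<le> norm (of_real a * \<omega>1 + of_real b * \<omega>2)"
proof -
  define \<tau> where "\<tau> = \<omega>2 / \<omega>1"
  define s where "s = \<bar>Im \<tau>\<bar>"
  define t where "t = norm \<tau>"
  have s: "s > 0" and t: "t \<ge> 0"
    using independent by (simp_all add: s_def t_def \<tau>_def)
  have "c * (\<bar>a\<bar> + \<bar>b\<bar>) \<le> norm (of_real a * \<omega>1 + of_real b * \<omega>2)"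
    if c_def: "c = norm \<omega>1 * s / (s + t + 1)" for a b :: real and c
  proof -
    define X where "X = norm (of_real a + of_real b * \<tau>)"
    have b: "\<bar>b\<bar> * s \<le> X"
      using abs_Im_le_cmod[of "of_real a + of_real b * \<tau>"] by (simp add: X_def s_def abs_mult)
    have a: "\<bar>a\<bar> \<le> X + \<bar>b\<bar> * t"
      using norm_triangle_ineq4[of "of_real a + of_real b * \<tau>" "of_real b * \<tau>"]
      by (simp add: X_def t_def norm_mult)
    have "s * (\<bar>a\<bar> + \<bar>b\<bar>) \<le> s * X + (\<bar>b\<bar> * s) * t + \<bar>b\<bar> * s"
      using mult_left_mono[OF a, of s] s by (simp add: algebra_simps)
    also have "\<dots> \<le> X * (s + t + 1)"
      using b t mult_right_mono[OF b t] by (simp add: algebra_simps)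
    finally have sX: "s * (\<bar>a\<bar> + \<bar>b\<bar>) \<le> X * (s + t + 1)" .
    have "c * (\<bar>a\<bar> + \<bar>b\<bar>) = norm \<omega>1 * (s * (\<bar>a\<bar> + \<bar>b\<bar>)) / (s + t + 1)"
      by (simp add: c_def)
    also have "\<dots> \<le> norm \<omega>1 * (X * (s + t + 1)) / (s + t + 1)"
      using sX s t by (intro divide_right_mono mult_left_mono) auto
    also have "\<dots> = norm \<omega>1 * X"
      using s t by simp
    also have "\<omega>1 * (of_real a + of_real b * \<tau>) = of_real a * \<omega>1 + of_real b * \<omega>2"
      using period1_nonzero by (simp add: \<tau>_def field_simps)
    then have "norm \<omega>1 * X = norm (of_real a * \<omega>1 + of_real b * \<omega>2)"
      by (metis X_def norm_mult)
    finally show ?thesis .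
  qed
  moreover have "norm \<omega>1 * s / (s + t + 1) > 0"
    using s t period1_nonzero by simp
  ultimately show ?thesis using that by blast
qed

definition lattice_point :: "int \<times> int \<Rightarrow> complex" where
  "lattice_point = (\<lambda>(m, k). of_int m * \<omega>1 + of_int k * \<omega>2)"

lemma range_lattice_point: "range lattice_point = \<Lambda>"
proof (intro equalityI subsetI)
  fix w assume "w \<in> \<Lambda>"
  then obtain m k where "w = lattice_point (m, k)"
    by (auto simp: mem_lattice_iff lattice_point_def)
  then show "w \<in> range lattice_point"
    by (rule range_eqI)
qed (auto simp: lattice_point_def intro: lattice_combination)

lemma norm_lattice_point_lower_bound:
  obtains c where "c > 0" "\<And>m k. c * (\<bar>real_of_int m\<bar> + \<bar>real_of_int k\<bar>) \<le> norm (lattice_point (m, k))"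
proof -
  obtain c where "c > 0" "\<And>a b::real. c * (\<bar>a\<bar> + \<bar>b\<bar>) \<le> norm (of_real a * \<omega>1 + of_real b * \<omega>2)"
    using norm_combination_lower_bound by blast
  with that show ?thesis
    by (metis lattice_point_def case_prod_conv of_real_of_int_eq)
qed

lemma inj_lattice_point: "inj lattice_point"
proof (rule injI)
  obtain c where c: "c > 0" "\<And>m k. c * (\<bar>real_of_int m\<bar> + \<bar>real_of_int k\<bar>) \<le> norm (lattice_point (m, k))"
    using norm_lattice_point_lower_bound by blast
  fix x y assume "lattice_point x = lattice_point y"
  moreover obtain m k m' k' where xy: "x = (m, k)" "y = (m', k')"
    by fastforce
  ultimately have "lattice_point (m - m', k - k') = 0"
    by (simp add: lattice_point_def algebra_simps)
  then show "x = y"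
    using c(1) c(2)[of "m - m'" "k - k'"] xy by (simp add: mult_le_0_iff) arith
qed

lemma finite_lattice_norm_le: "finite {w \<in> \<Lambda>. norm w \<le> R}"
proof -
  obtain c where c: "c > 0" "\<And>m k. c * (\<bar>real_of_int m\<bar> + \<bar>real_of_int k\<bar>) \<le> norm (lattice_point (m, k))"
    using norm_lattice_point_lower_bound by blast
  define K where "K = \<lceil>R / c\<rceil>"
  have "{w \<in> \<Lambda>. norm w \<le> R} \<subseteq> lattice_point ` ({-K..K} \<times> {-K..K})"
  proof safe
    fix w assume "w \<in> \<Lambda>" "norm w \<le> R"
    then obtain m k where w: "w = lattice_point (m, k)" and "norm w \<le> R"
      by (metis range_lattice_point rangeE surj_pair)
    then have "c * (\<bar>of_int m\<bar> + \<bar>of_int k\<bar>) \<le> R"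
      using c(2)[of m k] by simp
    then have "\<bar>of_int m\<bar> + \<bar>of_int k\<bar> \<le> R / c"
      using c(1) by (simp add: field_simps)
    then have "\<bar>m\<bar> \<le> K" "\<bar>k\<bar> \<le> K"
      unfolding K_def by linarith+
    then show "w \<in> lattice_point ` ({-K..K} \<times> {-K..K})"
      using w by (auto simp: abs_le_iff)
  qed
  then show ?thesis
    by (rule finite_subset) auto
qed

lemma not_islimpt_lattice: "\<not> z islimpt \<Lambda>"
proof -
  have "norm w \<le> norm z + 1" if "dist z w \<le> 1" for w
    using norm_triangle_sub[of w z] that by (simp add: dist_norm norm_minus_commute)
  then have "\<Lambda> \<inter> cball z 1 \<subseteq> {w \<in> \<Lambda>. norm w \<le> norm z + 1}"
    by auto
  then have "finite (\<Lambda> \<inter> cball z 1)"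
    using finite_lattice_norm_le finite_subset by blast
  then show ?thesis
    by (metis islimpt_eq_infinite_cball zero_less_one)
qed

lemma lattice_sparse: "\<Lambda> sparse_in UNIV"
  using not_islimpt_lattice by (auto simp: sparse_in_def)

lemma closed_lattice_diff: "closed (\<Lambda> - A)"
  by (rule sparse_in_UNIV_imp_closed, rule sparse_in_subset2[OF lattice_sparse]) auto

lemma summable_on_inverse_norm_cube: "(\<lambda>w. 1 / norm w ^ 3) summable_on (\<Lambda> - {0})"
proof -
  obtain c where c: "c > 0" "\<And>m k. c * (\<bar>real_of_int m\<bar> + \<bar>real_of_int k\<bar>) \<le> norm (lattice_point (m, k))"
    using norm_lattice_point_lower_bound by blast
  have "(\<lambda>x. 8 / c ^ 3 * (case x of (m, k) \<Rightarrow> ((1 + \<bar>real_of_int m\<bar>) * (1 + \<bar>real_of_int k\<bar>)) powr - (3/2)))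
      summable_on UNIV"
    by (rule summable_on_cmult_right[OF summable_on_int_pair_powr])
  then have "(\<lambda>w. 1 / norm w ^ 3) \<circ> lattice_point summable_on UNIV"
  proof (rule summable_on_comparison_test)
    fix x :: "int \<times> int"
    obtain m k where x: "x = (m, k)"
      by fastforce
    show "0 \<le> ((\<lambda>w. 1 / norm w ^ 3) \<circ> lattice_point) x"
      by simp
    show "((\<lambda>w. 1 / norm w ^ 3) \<circ> lattice_point) x
        \<le> 8 / c ^ 3 * (case x of (m, k) \<Rightarrow> ((1 + \<bar>real_of_int m\<bar>) * (1 + \<bar>real_of_int k\<bar>)) powr - (3/2))"
      using inverse_cube_le_powr_pair[OF _ c(1) c(2)[of m k]] c(1) x
      by (cases "x = (0, 0)") (auto simp: lattice_point_def)
  qed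
  then have "(\<lambda>w. 1 / norm w ^ 3) summable_on \<Lambda>"
    unfolding range_lattice_point[symmetric] using inj_lattice_point by (subst summable_on_reindex) auto
  then show ?thesis
    by (rule summable_on_subset) auto
qed

abbreviation wp :: "complex \<Rightarrow> complex" where "wp \<equiv> weierstrass_p \<Lambda>"
abbreviation \<zeta> :: "complex \<Rightarrow> complex" where "\<zeta> \<equiv> weierstrass_zeta \<Lambda>"

lemma summable_on_lattice_if_norm_le:
  fixes f :: "complex \<Rightarrow> complex"
  assumes "\<And>w. w \<in> \<Lambda> - {0} \<Longrightarrow> R \<le> norm w \<Longrightarrow> norm (f w) \<le> C / norm w ^ 3"
  shows "f summable_on \<Lambda>"
proof -
  define T where "T = {w \<in> \<Lambda> - {0}. R \<le> norm w}"
  have "(\<lambda>w. norm (f w)) summable_on T"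
  proof (rule Infinite_Sum.abs_summable_on_comparison_test')
    show "(\<lambda>w. C * (1 / norm w ^ 3)) summable_on T"
      by (intro summable_on_cmult_right summable_on_subset[OF summable_on_inverse_norm_cube])
        (auto simp: T_def)
  qed (use assms in \<open>auto simp: T_def\<close>)
  then have "f summable_on T"
    by (rule abs_summable_summable)
  moreover have "f summable_on {w \<in> \<Lambda>. norm w \<le> max R 0}"
    using finite_lattice_norm_le by simp
  ultimately have "f summable_on T \<union> {w \<in> \<Lambda>. norm w \<le> max R 0}"
    by (rule summable_on_union)
  then show ?thesis
    by (rule summable_on_subset) (auto simp: T_def)
qed

lemma wp_term_summable: "wp_term z summable_on \<Lambda>"
  by (rule summable_on_lattice_if_norm_le[where R = "2 * norm z"]) (auto intro: norm_wp_term_le)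

lemma zeta_term_summable: "zeta_term z summable_on \<Lambda>"
  by (rule summable_on_lattice_if_norm_le[where R = "2 * norm z"]) (auto intro: norm_zeta_term_le)

lemma has_sum_weierstrass_p: "(wp_term z has_sum wp z) \<Lambda>"
proof -
  have "(wp_term z has_sum (\<Sum>\<^sub>\<infinity>w\<in>\<Lambda> - {0}. wp_term z w)) (\<Lambda> - {0})"
    by (intro has_sum_infsum summable_on_subset[OF wp_term_summable]) auto
  from has_sum_insert[OF _ this, of 0] show ?thesis
    by (simp add: insert_absorb weierstrass_p_eq wp_term_def)
qed

lemma has_sum_weierstrass_zeta: "(zeta_term z has_sum \<zeta> z) \<Lambda>"
proof -
  have "(zeta_term z has_sum (\<Sum>\<^sub>\<infinity>w\<in>\<Lambda> - {0}. zeta_term z w)) (\<Lambda> - {0})"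
    by (intro has_sum_infsum summable_on_subset[OF zeta_term_summable]) auto
  from has_sum_insert[OF _ this, of 0] show ?thesis
    by (simp add: insert_absorb weierstrass_zeta_eq zeta_term_def)
qed

lemma has_field_derivative_zeta_term_tail:
  assumes T: "T \<subseteq> \<Lambda> - {0}" "\<And>w. w \<in> T \<Longrightarrow> 2 * \<rho> < norm w" and y: "norm y < \<rho>"
  shows "((\<lambda>y. \<Sum>\<^sub>\<infinity>w\<in>T. zeta_term y w) has_field_derivative (\<Sum>\<^sub>\<infinity>w\<in>T. - wp_term y w)) (at y)"
proof (rule has_field_derivative_infsum[where c = 0 and r = \<rho> and M = "\<lambda>w. 2 * \<rho>\<^sup>2 * (1 / norm w ^ 3)"])
  have close: "w \<noteq> 0" "2 * norm y' \<le> norm w" if "w \<in> T" "y' \<in> cball 0 \<rho>" for w y'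
    using that T(1) T(2)[OF that(1)] by auto
  show "y \<in> ball 0 \<rho>"
    using y by simp
  show "((\<lambda>y. zeta_term y w) has_field_derivative - wp_term y' w) (at y')"
    if "w \<in> T" "y' \<in> cball 0 \<rho>" for w y'
    using close[OF that] by (intro has_field_derivative_zeta_term) auto
  show "norm (zeta_term y' w) \<le> 2 * \<rho>\<^sup>2 * (1 / norm w ^ 3)" if "w \<in> T" "y' \<in> cball 0 \<rho>" for w y'
  proof -
    have "norm (zeta_term y' w) \<le> 2 * norm y' ^ 2 / norm w ^ 3"
      using close[OF that] by (rule norm_zeta_term_le)
    also have "\<dots> \<le> 2 * \<rho>\<^sup>2 / norm w ^ 3"
      using that by (intro divide_right_mono mult_left_mono power_mono) auto
    finally show ?thesis
      by simp
  qed
  show "(\<lambda>w. 2 * \<rho>\<^sup>2 * (1 / norm w ^ 3)) summable_on T"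
    by (intro summable_on_cmult_right summable_on_subset[OF summable_on_inverse_norm_cube T(1)])
  show "(\<lambda>w. - wp_term y w) summable_on T"
    unfolding summable_on_uminus using T(1) by (auto intro: summable_on_subset[OF wp_term_summable])
qed

lemma has_field_derivative_zeta_term_infsum:
  assumes "A \<subseteq> \<Lambda>" "y \<notin> A"
  shows "((\<lambda>y. \<Sum>\<^sub>\<infinity>w\<in>A. zeta_term y w) has_field_derivative - (\<Sum>\<^sub>\<infinity>w\<in>A. wp_term y w)) (at y)"
proof -
  define \<rho> where "\<rho> = norm y + 1"
  define K where "K = {w \<in> A. norm w \<le> 2 * \<rho>}"
  define T where "T = A - K"
  have "finite K"
    by (rule finite_subset[OF _ finite_lattice_norm_le[of "2 * \<rho>"]]) (use assms in \<open>auto simp: K_def\<close>)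
  have split: "(\<Sum>\<^sub>\<infinity>w\<in>A. f w) = (\<Sum>w\<in>K. f w) + (\<Sum>\<^sub>\<infinity>w\<in>T. f w)"
    if "f summable_on \<Lambda>" for f :: "complex \<Rightarrow> complex"
  proof -
    have "A = K \<union> T" "K \<inter> T = {}"
      by (auto simp: K_def T_def)
    then show ?thesis
      using assms(1) \<open>finite K\<close> by (metis infsum_Un_disjoint infsum_finite summable_on_subset[OF that] sup.bounded_iff)
  qed
  have "((\<lambda>y. \<Sum>\<^sub>\<infinity>w\<in>T. zeta_term y w) has_field_derivative (\<Sum>\<^sub>\<infinity>w\<in>T. - wp_term y w)) (at y)"
    using assms(1) by (intro has_field_derivative_zeta_term_tail[where \<rho> = \<rho>]) (auto simp: T_def K_def \<rho>_def)
  moreover have "((\<lambda>y. zeta_term y w) has_field_derivative - wp_term y w) (at y)" if "w \<in> K" for w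
    using that assms(2) by (intro has_field_derivative_zeta_term) (auto simp: K_def)
  ultimately have "((\<lambda>y. (\<Sum>w\<in>K. zeta_term y w) + (\<Sum>\<^sub>\<infinity>w\<in>T. zeta_term y w)) has_field_derivative
      (\<Sum>w\<in>K. - wp_term y w) + (\<Sum>\<^sub>\<infinity>w\<in>T. - wp_term y w)) (at y)"
    by (intro DERIV_add DERIV_sum) auto
  moreover have "(\<Sum>w\<in>K. - wp_term y w) + (\<Sum>\<^sub>\<infinity>w\<in>T. - wp_term y w) = - (\<Sum>\<^sub>\<infinity>w\<in>A. wp_term y w)"
    by (simp add: split[OF wp_term_summable] sum_negf infsum_uminus)
  ultimately show ?thesis
    by (simp add: split[OF zeta_term_summable])
qed

lemma has_field_derivative_weierstrass_zeta:
  assumes "z \<notin> \<Lambda>"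
  shows "(\<zeta> has_field_derivative - wp z) (at z)"
proof -
  have "\<zeta> = (\<lambda>y. \<Sum>\<^sub>\<infinity>w\<in>\<Lambda>. zeta_term y w)"
    by (rule ext) (simp add: infsumI[OF has_sum_weierstrass_zeta])
  moreover have "wp z = (\<Sum>\<^sub>\<infinity>w\<in>\<Lambda>. wp_term z w)"
    by (simp add: infsumI[OF has_sum_weierstrass_p])
  ultimately show ?thesis
    using has_field_derivative_zeta_term_infsum[of \<Lambda> z] assms by simp
qed

lemma open_lattice_compl: "open (- \<Lambda>)"
  using closed_lattice_diff[of "{}"] by (simp add: closed_open)

lemma holomorphic_weierstrass_zeta: "\<zeta> holomorphic_on - \<Lambda>"
  using has_field_derivative_weierstrass_zeta open_lattice_compl by (auto simp: holomorphic_on_open)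

lemma holomorphic_weierstrass_p: "wp holomorphic_on - \<Lambda>"
proof (rule holomorphic_transform)
  show "(\<lambda>z. - deriv \<zeta> z) holomorphic_on - \<Lambda>"
    by (intro holomorphic_intros holomorphic_deriv holomorphic_weierstrass_zeta open_lattice_compl)
  show "- deriv \<zeta> z = wp z" if "z \<in> - \<Lambda>" for z
    using DERIV_imp_deriv[OF has_field_derivative_weierstrass_zeta] that by simp
qed

lemma zeta_minus_pole_tendsto:
  shows "((\<lambda>y. \<zeta> y - 1 / y) \<longlongrightarrow> 0) (at 0)"
    and "((\<lambda>y. (\<zeta> y - 1 / y) / y) \<longlongrightarrow> 0) (at 0)"
proof -
  define R where "R = (\<lambda>y. \<Sum>\<^sub>\<infinity>w\<in>\<Lambda> - {0}. zeta_term y w)"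
  have R_eq: "\<zeta> y - 1 / y = R y" for y
    by (simp add: weierstrass_zeta_eq R_def)
  have R: "(R has_field_derivative 0) (at 0)" "R 0 = 0"
    using has_field_derivative_zeta_term_infsum[of "\<Lambda> - {0}" 0] by (simp_all add: R_def)
  show "((\<lambda>y. \<zeta> y - 1 / y) \<longlongrightarrow> 0) (at 0)"
    using DERIV_isCont[OF R(1)] R(2) by (simp add: R_eq isCont_def)
  show "((\<lambda>y. (\<zeta> y - 1 / y) / y) \<longlongrightarrow> 0) (at 0)"
    using R unfolding has_field_derivative_iff by (simp add: R_eq)
qed

lemma wp_minus_pole_tendsto: "((\<lambda>y. wp y - 1 / y\<^sup>2) \<longlongrightarrow> 0) (at 0)"
proof -
  define S where "S = - (\<Lambda> - {0})"
  define R where "R = (\<lambda>y. \<Sum>\<^sub>\<infinity>w\<in>\<Lambda> - {0}. zeta_term y w)"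
  define W where "W = (\<lambda>y. \<Sum>\<^sub>\<infinity>w\<in>\<Lambda> - {0}. wp_term y w)"
  have S: "open S" "0 \<in> S"
    unfolding S_def by (rule open_Compl[OF closed_lattice_diff]) simp
  have R: "(R has_field_derivative - W y) (at y)" if "y \<in> S" for y
    unfolding R_def W_def using that by (intro has_field_derivative_zeta_term_infsum) (auto simp: S_def)
  have "W holomorphic_on S"
  proof (rule holomorphic_transform)
    show "(\<lambda>y. - deriv R y) holomorphic_on S"
      using R S(1) by (intro holomorphic_intros holomorphic_deriv) (auto simp: holomorphic_on_open)
    show "- deriv R y = W y" if "y \<in> S" for y
      using DERIV_imp_deriv[OF R[OF that]] by simp
  qed
  then have "isCont W 0"
    using S continuous_on_eq_continuous_at holomorphic_on_imp_continuous_on by blast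
  moreover have "(\<lambda>y. wp y - 1 / y\<^sup>2) = W" "W 0 = 0"
    by (simp_all add: weierstrass_p_eq W_def)
  ultimately show ?thesis
    by (simp add: isCont_def)
qed

lemma has_sum_lattice_translate:
  assumes "\<omega> \<in> \<Lambda>" "(f has_sum s) \<Lambda>"
  shows "((\<lambda>u. f (u + \<omega>)) has_sum s) \<Lambda>"
proof -
  have "bij_betw (\<lambda>u. u + \<omega>) \<Lambda> \<Lambda>"
    using lattice_translate_eq[OF assms(1)] by (simp add: bij_betw_def inj_on_def)
  from has_sum_reindex_bij_betw[OF this, of f s] assms(2) show ?thesis
    by simp
qed

lemma has_sum_lattice_uminus:
  assumes "(f has_sum s) \<Lambda>"
  shows "((\<lambda>u. f (- u)) has_sum s) \<Lambda>"
proof -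
  have "bij_betw uminus \<Lambda> \<Lambda>"
    using lattice_uminus_eq by (simp add: bij_betw_def)
  from has_sum_reindex_bij_betw[OF this, of f s] assms show ?thesis
    by simp
qed

lemma weierstrass_p_uminus [simp]: "wp (- z) = wp z"
proof -
  have "wp_term z (- u) = wp_term (- z) u" for u
    by (simp add: wp_term_def power2_eq_square algebra_simps)
  then have "(wp_term (- z) has_sum wp z) \<Lambda>"
    using has_sum_lattice_uminus[OF has_sum_weierstrass_p[of z]] by simp
  then show ?thesis
    using has_sum_weierstrass_p has_sum_unique by blast
qed

lemma weierstrass_zeta_uminus [simp]: "\<zeta> (- z) = - \<zeta> z"
proof -
  have "zeta_term z (- u) = - zeta_term (- z) u" for u
  proof -
    have "1 / (- z - u) = 1 / - (z + u)"
      by simp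
    also have "\<dots> = - (1 / (z + u))"
      by (rule divide_minus_right)
    finally show ?thesis
      by (simp add: zeta_term_def algebra_simps)
  qed
  then have "(zeta_term (- z) has_sum - \<zeta> z) \<Lambda>"
    using has_sum_lattice_uminus[OF has_sum_weierstrass_zeta[of z]] by (simp add: has_sum_uminus)
  then show ?thesis
    using has_sum_weierstrass_zeta has_sum_unique by (metis minus_minus)
qed

lemma has_sum_weierstrass_p_translate_diff:
  assumes "\<omega> \<in> \<Lambda>"
  shows "((\<lambda>u. 1 / u\<^sup>2 - 1 / (u + \<omega>)\<^sup>2) has_sum wp (z + \<omega>) - wp z) \<Lambda>"
proof -
  have "((\<lambda>u. wp_term (z + \<omega>) (u + \<omega>) - wp_term z u) has_sum wp (z + \<omega>) - wp z) \<Lambda>"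
    by (intro has_sum_diff has_sum_lattice_translate assms has_sum_weierstrass_p)
  then show ?thesis
    by (simp add: wp_term_def)
qed

lemma weierstrass_p_periodic:
  assumes "\<omega> \<in> \<Lambda>"
  shows "wp (z + \<omega>) = wp z"
proof -
  \<comment> \<open>the difference does not depend on \<open>z\<close>, and at the half period it vanishes by evenness\<close>
  have "wp (z + \<omega>) - wp z = wp (- (\<omega> / 2) + \<omega>) - wp (- (\<omega> / 2))"
    using has_sum_weierstrass_p_translate_diff[OF assms, of z]
      has_sum_weierstrass_p_translate_diff[OF assms, of "- (\<omega> / 2)"] by (rule has_sum_unique)
  also have "- (\<omega> / 2) + \<omega> = \<omega> / 2"
    by simp
  finally show ?thesis
    by simp
qed

lemma weierstrass_zeta_translate_diff:
  assumes "\<omega> \<in> \<Lambda>"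
  shows "\<zeta> (z + \<omega>) - \<zeta> z = \<zeta> (z' + \<omega>) - \<zeta> z'"
proof -
  define e where "e z u = zeta_term (z + \<omega>) (u + \<omega>) - zeta_term z u" for z u
  have e: "(e z has_sum \<zeta> (z + \<omega>) - \<zeta> z) \<Lambda>" for z
    unfolding e_def by (intro has_sum_diff has_sum_lattice_translate assms has_sum_weierstrass_zeta)
  have "e z u - e z' u = (z' - z) * (1 / u\<^sup>2 - 1 / (u + \<omega>)\<^sup>2)" for u
    by (simp add: e_def zeta_term_def divide_inverse algebra_simps)
  moreover have "((\<lambda>u. 1 / u\<^sup>2 - 1 / (u + \<omega>)\<^sup>2) has_sum 0) \<Lambda>"
    using has_sum_weierstrass_p_translate_diff[OF assms, of 0] weierstrass_p_periodic[OF assms, of 0]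
    by simp
  ultimately have "((\<lambda>u. e z u - e z' u) has_sum 0) \<Lambda>"
    using has_sum_cmult_right[of _ \<Lambda> 0 "z' - z"] by simp
  moreover have "((\<lambda>u. e z u - e z' u) has_sum (\<zeta> (z + \<omega>) - \<zeta> z) - (\<zeta> (z' + \<omega>) - \<zeta> z')) \<Lambda>"
    by (intro has_sum_diff e)
  ultimately show ?thesis
    using has_sum_unique by fastforce
qed

lemma bounded_range_if_periodic:
  assumes cont: "continuous_on UNIV F" and periodic: "\<And>z \<omega>. \<omega> \<in> \<Lambda> \<Longrightarrow> F (z + \<omega>) = F z"
  shows "bounded (range F)"
proof -
  define P where "P = (\<lambda>p. of_real (fst p) * \<omega>1 + of_real (snd p) * \<omega>2) ` ({0..1} \<times> {0..1::real})"
  have "compact P"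
    unfolding P_def by (intro compact_continuous_image compact_Times compact_Icc continuous_intros)
  then have "bounded (F ` P)"
    by (intro compact_imp_bounded compact_continuous_image continuous_on_subset[OF cont]) auto
  moreover have "range F \<subseteq> F ` P"
  proof clarify
    fix z
    obtain a b where z: "z = of_real a * \<omega>1 + of_real b * \<omega>2"
      using ex_real_coordinates by blast
    define z' where "z' = of_real (frac a) * \<omega>1 + of_real (frac b) * \<omega>2"
    have "z = z' + (of_int \<lfloor>a\<rfloor> * \<omega>1 + of_int \<lfloor>b\<rfloor> * \<omega>2)"
      by (simp add: z z'_def frac_def algebra_simps)
    then have "F z = F z'"
      using periodic lattice_combination by metis
    moreover have "z' \<in> P"
      unfolding P_def z'_def
      by (rule image_eqI[where x = "(frac a, frac b)"]) (auto simp: frac_lt_1 less_imp_le)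
    ultimately show "F z \<in> F ` P"
      by simp
  qed
  ultimately show ?thesis
    by (rule bounded_subset)
qed

lemma periodic_entire_constant:
  assumes holo: "F holomorphic_on UNIV" and periodic: "\<And>z \<omega>. \<omega> \<in> \<Lambda> \<Longrightarrow> F (z + \<omega>) = F z"
  shows "F z = F z'"
proof -
  have "bounded (range F)"
    using holomorphic_on_imp_continuous_on[OF holo] periodic by (rule bounded_range_if_periodic)
  then obtain c where "\<And>z. F z = c"
    using Liouville_theorem[OF holo] by (auto simp: constant_on_def)
  then show ?thesis
    by simp
qed

definition zeta_addition_defect :: "complex \<Rightarrow> complex \<Rightarrow> complex" where
  "zeta_addition_defect w z = (\<zeta> z + \<zeta> w - \<zeta> (z + w))\<^sup>2 - wp z - wp w - wp (z + w)"

lemma zeta_addition_defect_periodic: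
  assumes "\<omega> \<in> \<Lambda>"
  shows "zeta_addition_defect w (z + \<omega>) = zeta_addition_defect w z"
proof -
  have "\<zeta> (z + \<omega>) + \<zeta> w - \<zeta> (z + \<omega> + w) = \<zeta> z + \<zeta> w - \<zeta> (z + w)"
    using weierstrass_zeta_translate_diff[OF assms, of z "z + w"] by (simp add: algebra_simps)
  moreover have "wp (z + \<omega> + w) = wp (z + w)"
    using weierstrass_p_periodic[OF assms, of "z + w"] by (simp add: algebra_simps)
  ultimately show ?thesis
    unfolding zeta_addition_defect_def by (simp only: weierstrass_p_periodic[OF assms])
qed

lemma zeta_addition_defect_shift: "zeta_addition_defect w z = zeta_addition_defect (- w) (z + w)"
proof -
  have "(\<zeta> (z + w) - \<zeta> w - \<zeta> z)\<^sup>2 = (\<zeta> z + \<zeta> w - \<zeta> (z + w))\<^sup>2"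
    by (simp add: power2_eq_square algebra_simps)
  then show ?thesis
    by (simp add: zeta_addition_defect_def)
qed

lemma zeta_addition_defect_tendsto_0:
  assumes w: "w \<notin> \<Lambda>"
  shows "(zeta_addition_defect w \<longlongrightarrow> 0) (at 0)"
proof -
  define r where "r = (\<lambda>y. \<zeta> y - 1 / y)"
  define s where "s = (\<lambda>y. \<zeta> w - \<zeta> (w + y))"
  define p where "p = (\<lambda>y. wp y - 1 / y\<^sup>2)"
  have "continuous_on (- \<Lambda>) \<zeta>" "continuous_on (- \<Lambda>) wp"
    using holomorphic_weierstrass_zeta holomorphic_weierstrass_p by (auto intro: holomorphic_on_imp_continuous_on)
  then have cont: "isCont \<zeta> w" "isCont wp w"
    using w open_lattice_compl continuous_on_eq_continuous_at by blast+
  have "((\<lambda>y. - ((\<zeta> (w + y) - \<zeta> w) / y)) \<longlongrightarrow> - (- wp w)) (at 0)"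
    using DERIV_D[OF has_field_derivative_weierstrass_zeta[OF w]] by (rule tendsto_minus)
  then have s_quot: "((\<lambda>y. s y / y) \<longlongrightarrow> wp w) (at 0)"
    by (simp add: s_def minus_divide_left)
  have s: "(s \<longlongrightarrow> 0) (at 0)"
    using tendsto_diff[OF tendsto_const LIM_offset_zero[OF cont(1)[unfolded isCont_def]], of "\<zeta> w"]
    by (simp add: s_def)
  have wp_shift: "((\<lambda>y. wp (w + y)) \<longlongrightarrow> wp w) (at 0)"
    using LIM_offset_zero[OF cont(2)[unfolded isCont_def]] .
  have "((\<lambda>y. 2 * (r y / y + s y / y) + (r y + s y)\<^sup>2 - p y - wp w - wp (w + y)) \<longlongrightarrow>
      2 * (0 + wp w) + (0 + 0)\<^sup>2 - 0 - wp w - wp w) (at 0)"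
    using zeta_minus_pole_tendsto wp_minus_pole_tendsto
    by (intro tendsto_intros s_quot s wp_shift) (simp_all add: r_def p_def)
  moreover have "eventually (\<lambda>y. 2 * (r y / y + s y / y) + (r y + s y)\<^sup>2 - p y - wp w - wp (w + y)
      = zeta_addition_defect w y) (at 0)"
  proof (rule eventually_mono[OF eventually_neq_at_within[of 0]])
    fix y :: complex assume "y \<noteq> 0"
    then show "2 * (r y / y + s y / y) + (r y + s y)\<^sup>2 - p y - wp w - wp (w + y) = zeta_addition_defect w y"
      by (simp add: zeta_addition_defect_def r_def s_def p_def add.commute field_simps power2_eq_square)
  qed
  ultimately show ?thesis
    by (simp add: Lim_transform_eventually)
qed

lemma zeta_addition_defect_tendsto_poles:
  assumes w: "w \<notin> \<Lambda>" and z0: "z0 \<in> \<Lambda> \<or> z0 + w \<in> \<Lambda>"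
  shows "(zeta_addition_defect w \<longlongrightarrow> 0) (at z0)"
proof -
  have at_lattice: "(zeta_addition_defect w \<longlongrightarrow> 0) (at z0)" if "w \<notin> \<Lambda>" "z0 \<in> \<Lambda>" for w z0
  proof -
    have "((\<lambda>x. zeta_addition_defect w (x + - z0)) \<longlongrightarrow> 0) (at (0 - - z0))"
      using zeta_addition_defect_tendsto_0[OF that(1)] by (rule LIM_offset)
    then show ?thesis
      using zeta_addition_defect_periodic[of "- z0" w] that(2) by simp
  qed
  show ?thesis
    using z0
  proof
    assume "z0 + w \<in> \<Lambda>"
    then have "((\<lambda>x. zeta_addition_defect (- w) (x + w)) \<longlongrightarrow> 0) (at (z0 + w - w))"
      using at_lattice[of "- w" "z0 + w"] w by (intro LIM_offset) simp
    then show ?thesis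
      by (simp flip: zeta_addition_defect_shift)
  qed (use at_lattice w in blast)
qed

lemma holomorphic_zeta_addition_defect:
  "zeta_addition_defect w holomorphic_on - (\<Lambda> \<union> {z. z + w \<in> \<Lambda>})"
proof -
  have shifted: "(\<lambda>z. f (z + w)) holomorphic_on - (\<Lambda> \<union> {z. z + w \<in> \<Lambda>})"
    if "f holomorphic_on - \<Lambda>" for f
  proof -
    have "(f \<circ> (\<lambda>z. z + w)) holomorphic_on - (\<Lambda> \<union> {z. z + w \<in> \<Lambda>})"
      by (rule holomorphic_on_compose_gen[OF _ that]) (auto intro!: holomorphic_intros)
    then show ?thesis
      by (simp add: o_def)
  qed
  show ?thesis
    unfolding zeta_addition_defect_def [abs_def]
    by (intro holomorphic_intros shifted holomorphic_weierstrass_zeta holomorphic_weierstrass_p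
        holomorphic_on_subset[OF holomorphic_weierstrass_zeta] holomorphic_on_subset[OF holomorphic_weierstrass_p])
      auto
qed

theorem weierstrass_zeta_addition:
  assumes "a \<notin> \<Lambda>" "b \<notin> \<Lambda>" "a + b \<notin> \<Lambda>"
  shows "(\<zeta> a + \<zeta> b - \<zeta> (a + b))\<^sup>2 = wp a + wp b + wp (a + b)"
proof -
  define B where "B = \<Lambda> \<union> {z. z + b \<in> \<Lambda>}"
  define F where "F z = (if z \<in> B then 0 else zeta_addition_defect b z)" for z
  have "(+) (- b) ` \<Lambda> sparse_in UNIV"
    by (rule sparse_in_translate_UNIV[OF lattice_sparse])
  moreover have "{z. z + b \<in> \<Lambda>} = (+) (- b) ` \<Lambda>"
    by (auto simp: image_iff algebra_simps intro!: bexI[where x = "_ + b"])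
  ultimately have "B sparse_in UNIV"
    unfolding B_def by (intro sparse_in_union' lattice_sparse) simp
  then have "F holomorphic_on UNIV"
    unfolding F_def [abs_def] B_def
    using holomorphic_zeta_addition_defect zeta_addition_defect_tendsto_poles[OF assms(2)]
    by (intro holomorphic_on_UNIV_if_tendsto_0_at_sparse) auto
  moreover have "F (z + \<omega>) = F z" if "\<omega> \<in> \<Lambda>" for z \<omega>
  proof -
    have "z + \<omega> \<in> B \<longleftrightarrow> z \<in> B"
      using lattice_add_right_iff[OF that, of z] lattice_add_right_iff[OF that, of "z + b"]
      by (simp add: B_def add.commute add.left_commute)
    then show ?thesis
      by (simp add: F_def zeta_addition_defect_periodic[OF that])
  qed
  ultimately have "F a = F 0"
    by (rule periodic_entire_constant)
  with assms show ?thesis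
    by (simp add: F_def B_def zeta_addition_defect_def algebra_simps)
qed

lemma wp_ij_sym: "wp_ij \<Lambda> p j i = wp_ij \<Lambda> p i j"
  using weierstrass_p_uminus[of "p i - p j"] by (simp add: wp_ij_def)

lemma zeta_ij_antisym: "zeta_ij \<Lambda> p j i = - zeta_ij \<Lambda> p i j"
  using weierstrass_zeta_uminus[of "p i - p j"] by (simp add: zeta_ij_def)

lemma zeta_ij_addition:
  assumes "p i - p j \<notin> \<Lambda>" "p j - p k \<notin> \<Lambda>" "p k - p i \<notin> \<Lambda>"
  shows "(zeta_ij \<Lambda> p i j + zeta_ij \<Lambda> p j k + zeta_ij \<Lambda> p k i)\<^sup>2 = wp_ij \<Lambda> p i j + wp_ij \<Lambda> p j k + wp_ij \<Lambda> p k i"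
proof -
  define a b where "a = p i - p j" and "b = p j - p k"
  have ki: "p k - p i = - (a + b)"
    by (simp add: a_def b_def)
  have "i \<noteq> j" "j \<noteq> k" "k \<noteq> i"
    using assms by auto
  then have "zeta_ij \<Lambda> p i j = \<zeta> a" "zeta_ij \<Lambda> p j k = \<zeta> b" "zeta_ij \<Lambda> p k i = - \<zeta> (a + b)"
      "wp_ij \<Lambda> p i j = wp a" "wp_ij \<Lambda> p j k = wp b" "wp_ij \<Lambda> p k i = wp (a + b)"
    by (simp_all only: zeta_ij_def wp_ij_def a_def b_def ki if_False weierstrass_zeta_uminus weierstrass_p_uminus)
  moreover have "a + b = - (p k - p i)"
    by (simp add: a_def b_def)
  then have "a + b \<notin> \<Lambda>"
    using assms(3) by (metis lattice_uminus_iff)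
  moreover have "a \<notin> \<Lambda>" "b \<notin> \<Lambda>"
    using assms by (simp_all add: a_def b_def)
  ultimately show ?thesis
    using weierstrass_zeta_addition[of a b] by (simp add: algebra_simps)
qed

end

section \<open>Signed double and triple sums\<close>

lemma sum_rotate3:
  "(\<Sum>i\<in>N. \<Sum>j\<in>N. \<Sum>k\<in>N. f j k i) = (\<Sum>i\<in>N. \<Sum>j\<in>N. \<Sum>k\<in>N. f i j k)"
proof -
  have "(\<Sum>i\<in>N. \<Sum>j\<in>N. \<Sum>k\<in>N. f j k i) = (\<Sum>j\<in>N. \<Sum>i\<in>N. \<Sum>k\<in>N. f j k i)"
    by (rule sum.swap)
  also have "\<dots> = (\<Sum>j\<in>N. \<Sum>k\<in>N. \<Sum>i\<in>N. f j k i)"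
    by (intro sum.cong refl sum.swap)
  finally show ?thesis .
qed

lemma sum_triple_eq_if_cyclic_sums_eq:
  fixes f g :: "'i \<Rightarrow> 'i \<Rightarrow> 'i \<Rightarrow> 'a :: field_char_0"
  assumes "\<And>i j k. i \<in> N \<Longrightarrow> j \<in> N \<Longrightarrow> k \<in> N \<Longrightarrow>
    f i j k + f j k i + f k i j = g i j k + g j k i + g k i j"
  shows "(\<Sum>i\<in>N. \<Sum>j\<in>N. \<Sum>k\<in>N. f i j k) = (\<Sum>i\<in>N. \<Sum>j\<in>N. \<Sum>k\<in>N. g i j k)"
proof -
  have cyclic: "3 * (\<Sum>i\<in>N. \<Sum>j\<in>N. \<Sum>k\<in>N. h i j k) =
      (\<Sum>i\<in>N. \<Sum>j\<in>N. \<Sum>k\<in>N. h i j k + h j k i + h k i j)" for h :: "'i \<Rightarrow> 'i \<Rightarrow> 'i \<Rightarrow> 'a"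
    using sum_rotate3[of h N] sum_rotate3[of "\<lambda>i j k. h j k i" N] by (simp add: sum.distrib)
  have "3 * (\<Sum>i\<in>N. \<Sum>j\<in>N. \<Sum>k\<in>N. f i j k) = 3 * (\<Sum>i\<in>N. \<Sum>j\<in>N. \<Sum>k\<in>N. g i j k)"
    unfolding cyclic using assms by (intro sum.cong refl) auto
  then show ?thesis
    by simp
qed

lemma sum_sum_swap_symmetric:
  assumes "\<And>i j. i \<in> N \<Longrightarrow> j \<in> N \<Longrightarrow> Q j i = Q i j"
  shows "(\<Sum>i\<in>N. \<Sum>j\<in>N. s j * Q i j) = (\<Sum>i\<in>N. \<Sum>j\<in>N. s i * Q i j)"
proof -
  have "(\<Sum>i\<in>N. \<Sum>j\<in>N. s j * Q i j) = (\<Sum>j\<in>N. \<Sum>i\<in>N. s j * Q i j)"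
    by (rule sum.swap)
  also have "\<dots> = (\<Sum>j\<in>N. \<Sum>i\<in>N. s j * Q j i)"
    using assms by (intro sum.cong refl) auto
  finally show ?thesis .
qed

lemma sum_symmetric_eq_upper_triangle:
  fixes Q :: "'i :: linorder \<Rightarrow> 'i \<Rightarrow> 'a :: comm_semiring_1"
  assumes "\<And>i. i \<in> N \<Longrightarrow> Q i i = 0" and "\<And>i j. i \<in> N \<Longrightarrow> j \<in> N \<Longrightarrow> Q j i = Q i j"
  shows "(\<Sum>i\<in>N. \<Sum>j\<in>N. s i * Q i j) = (\<Sum>i\<in>N. \<Sum>j\<in>N. if i < j then (s i + s j) * Q i j else 0)"
proof -
  have "(\<Sum>i\<in>N. \<Sum>j\<in>N. s i * Q i j) =
      (\<Sum>i\<in>N. \<Sum>j\<in>N. (if i < j then s i * Q i j else 0) + (if j < i then s i * Q i j else 0))"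
    using assms(1) by (intro sum.cong refl) auto
  also have "\<dots> = (\<Sum>i\<in>N. \<Sum>j\<in>N. if i < j then s i * Q i j else 0) +
      (\<Sum>i\<in>N. \<Sum>j\<in>N. if j < i then s i * Q i j else 0)"
    by (simp add: sum.distrib)
  also have "(\<Sum>i\<in>N. \<Sum>j\<in>N. if j < i then s i * Q i j else 0) = (\<Sum>i\<in>N. \<Sum>j\<in>N. if i < j then s j * Q i j else 0)"
    by (subst sum.swap) (use assms(2) in \<open>auto intro!: sum.cong\<close>)
  finally show ?thesis
    by (simp add: sum.distrib[symmetric] distrib_right if_distrib cong: if_cong)
qed

lemma sum_squared_weighted_rows:
  fixes s :: "'i \<Rightarrow> 'a :: comm_ring_1"
  assumes "finite N" and s: "\<And>i. i \<in> N \<Longrightarrow> s i * s i = 1" and Z: "\<And>i. i \<in> N \<Longrightarrow> Z i i = 0"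
  shows "(\<Sum>i\<in>N. s i * (\<Sum>j\<in>N. s j * Z i j)\<^sup>2) = (\<Sum>i\<in>N. \<Sum>j\<in>N. s i * (Z i j)\<^sup>2) +
      (\<Sum>i\<in>N. \<Sum>j\<in>N. \<Sum>k\<in>N. if i \<noteq> j \<and> j \<noteq> k \<and> k \<noteq> i then s i * s j * s k * Z i j * Z i k else 0)"
proof -
  have ss: "s j * (s j * x) = x" if "j \<in> N" for j x
    using s[OF that] by (metis mult.assoc mult_1)
  have "s i * s j * s k * Z i j * Z i k = (if j = k then s i * (Z i j)\<^sup>2 else 0) +
      (if i \<noteq> j \<and> j \<noteq> k \<and> k \<noteq> i then s i * s j * s k * Z i j * Z i k else 0)"
    if "i \<in> N" "j \<in> N" "k \<in> N" for i j k
    using that Z[of i] by (auto simp: power2_eq_square mult_ac ss)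
  then have "(\<Sum>i\<in>N. \<Sum>j\<in>N. \<Sum>k\<in>N. s i * s j * s k * Z i j * Z i k) = (\<Sum>i\<in>N. \<Sum>j\<in>N. \<Sum>k\<in>N.
      (if j = k then s i * (Z i j)\<^sup>2 else 0) +
      (if i \<noteq> j \<and> j \<noteq> k \<and> k \<noteq> i then s i * s j * s k * Z i j * Z i k else 0))"
    by (intro sum.cong refl) auto
  then show ?thesis
    using \<open>finite N\<close>
    by (simp add: sum.distrib power2_eq_square sum_product sum_distrib_left mult_ac)
qed

lemma sum_distinct_triples_symmetric:
  fixes s :: "'i \<Rightarrow> 'a :: comm_ring_1"
  assumes "finite N" and s: "\<And>i. i \<in> N \<Longrightarrow> s i * s i = 1" "(\<Sum>i\<in>N. s i) = 0"
    and Q: "\<And>i. i \<in> N \<Longrightarrow> Q i i = 0" "\<And>i j. i \<in> N \<Longrightarrow> j \<in> N \<Longrightarrow> Q j i = Q i j"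
  shows "(\<Sum>i\<in>N. \<Sum>j\<in>N. \<Sum>k\<in>N. if i \<noteq> j \<and> j \<noteq> k \<and> k \<noteq> i then s i * s j * s k * Q i j else 0) =
      - 2 * (\<Sum>i\<in>N. \<Sum>j\<in>N. s i * Q i j)"
proof -
  have ss: "s j * (s j * x) = x" if "j \<in> N" for j x
    using s(1)[OF that] by (metis mult.assoc mult_1)
  have third: "(\<Sum>k\<in>N. if i \<noteq> j \<and> j \<noteq> k \<and> k \<noteq> i then s k else 0) = (if i = j then 0 else - s i - s j)"
    if "i \<in> N" "j \<in> N" for i j
  proof (cases "i = j")
    case False
    have "(\<Sum>k\<in>N. if i \<noteq> j \<and> j \<noteq> k \<and> k \<noteq> i then s k else 0) = (\<Sum>k\<in>N - {i, j}. s k)"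
      using False \<open>finite N\<close> by (intro sum.mono_neutral_cong_right) auto
    also have "\<dots> = (\<Sum>k\<in>N. s k) - (s i + s j)"
      using False that \<open>finite N\<close> by (subst sum_diff) auto
    finally show ?thesis
      using False s(2) by simp
  qed simp
  have "(\<Sum>i\<in>N. \<Sum>j\<in>N. \<Sum>k\<in>N. if i \<noteq> j \<and> j \<noteq> k \<and> k \<noteq> i then s i * s j * s k * Q i j else 0) =
      (\<Sum>i\<in>N. \<Sum>j\<in>N. s i * s j * Q i j * (\<Sum>k\<in>N. if i \<noteq> j \<and> j \<noteq> k \<and> k \<noteq> i then s k else 0))"
    by (simp add: sum_distrib_left if_distrib mult_ac cong: if_cong)
  also have "\<dots> = (\<Sum>i\<in>N. \<Sum>j\<in>N. - (s j * Q i j) - s i * Q i j)"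
    using Q(1) by (intro sum.cong refl) (auto simp: third algebra_simps ss)
  also have "\<dots> = - 2 * (\<Sum>i\<in>N. \<Sum>j\<in>N. s i * Q i j)"
    using sum_sum_swap_symmetric[of N Q s, OF Q(2)] by (simp add: sum_subtractf sum_negf)
  finally show ?thesis .
qed

lemma sum_distinct_triples_cyclic:
  fixes s :: "'i \<Rightarrow> 'a :: field_char_0" and Z Q :: "'i \<Rightarrow> 'i \<Rightarrow> 'a"
  assumes "\<And>i j k. i \<in> N \<Longrightarrow> j \<in> N \<Longrightarrow> k \<in> N \<Longrightarrow> i \<noteq> j \<Longrightarrow> j \<noteq> k \<Longrightarrow> k \<noteq> i \<Longrightarrow>
      Z i j * Z i k + Z j k * Z j i + Z k i * Z k j = Q i j + Q j k + Q k i"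
  shows "(\<Sum>i\<in>N. \<Sum>j\<in>N. \<Sum>k\<in>N. if i \<noteq> j \<and> j \<noteq> k \<and> k \<noteq> i then s i * s j * s k * Z i j * Z i k else 0) =
    (\<Sum>i\<in>N. \<Sum>j\<in>N. \<Sum>k\<in>N. if i \<noteq> j \<and> j \<noteq> k \<and> k \<noteq> i then s i * s j * s k * Q i j else 0)"
proof (rule sum_triple_eq_if_cyclic_sums_eq)
  fix i j k assume ijk: "i \<in> N" "j \<in> N" "k \<in> N"
  show "(if i \<noteq> j \<and> j \<noteq> k \<and> k \<noteq> i then s i * s j * s k * Z i j * Z i k else 0) +
      (if j \<noteq> k \<and> k \<noteq> i \<and> i \<noteq> j then s j * s k * s i * Z j k * Z j i else 0) +
      (if k \<noteq> i \<and> i \<noteq> j \<and> j \<noteq> k then s k * s i * s j * Z k i * Z k j else 0) =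
    (if i \<noteq> j \<and> j \<noteq> k \<and> k \<noteq> i then s i * s j * s k * Q i j else 0) +
      (if j \<noteq> k \<and> k \<noteq> i \<and> i \<noteq> j then s j * s k * s i * Q j k else 0) +
      (if k \<noteq> i \<and> i \<noteq> j \<and> j \<noteq> k then s k * s i * s j * Q k i else 0)"
  proof (cases "i \<noteq> j \<and> j \<noteq> k \<and> k \<noteq> i")
    case True
    then have "s i * s j * s k * (Z i j * Z i k + Z j k * Z j i + Z k i * Z k j) =
        s i * s j * s k * (Q i j + Q j k + Q k i)"
      using assms[OF ijk] by simp
    then show ?thesis
      using True by (simp add: algebra_simps)
  qed auto
qed

lemma sum_signed_squares_eq_signed_row_sums:
  fixes s :: "'i \<Rightarrow> 'a :: field_char_0" and Z P :: "'i \<Rightarrow> 'i \<Rightarrow> 'a"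
  assumes "finite N" and s: "\<And>i. i \<in> N \<Longrightarrow> s i * s i = 1" "(\<Sum>i\<in>N. s i) = 0"
    and diag: "\<And>i. i \<in> N \<Longrightarrow> Z i i = 0" "\<And>i. i \<in> N \<Longrightarrow> P i i = 0"
    and Z_antisym: "\<And>i j. i \<in> N \<Longrightarrow> j \<in> N \<Longrightarrow> Z j i = - Z i j"
    and P_sym: "\<And>i j. i \<in> N \<Longrightarrow> j \<in> N \<Longrightarrow> P j i = P i j"
    and addition: "\<And>i j k. i \<in> N \<Longrightarrow> j \<in> N \<Longrightarrow> k \<in> N \<Longrightarrow> i \<noteq> j \<Longrightarrow> j \<noteq> k \<Longrightarrow> k \<noteq> i \<Longrightarrow>
      (Z i j + Z j k + Z k i)\<^sup>2 = P i j + P j k + P k i"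
  shows "(\<Sum>i\<in>N. s i * (\<Sum>j\<in>N. s j * Z i j)\<^sup>2) = (\<Sum>i\<in>N. s i * (\<Sum>j\<in>N. P i j))"
proof -
  define Q where "Q i j = ((Z i j)\<^sup>2 - P i j) / 2" for i j
  have Q: "Q i i = 0" "Q j i = Q i j" if "i \<in> N" "j \<in> N" for i j
    using that diag Z_antisym[of i j] P_sym[of i j] by (simp_all add: Q_def)
  have "Z i j * Z i k + Z j k * Z j i + Z k i * Z k j = Q i j + Q j k + Q k i"
    if ijk: "i \<in> N" "j \<in> N" "k \<in> N" "i \<noteq> j" "j \<noteq> k" "k \<noteq> i" for i j k
  proof -
    have "Z i j * Z i k + Z j k * Z j i + Z k i * Z k j =
        ((Z i j)\<^sup>2 + (Z j k)\<^sup>2 + (Z k i)\<^sup>2 - (Z i j + Z j k + Z k i)\<^sup>2) / 2"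
      using Z_antisym[of k i] Z_antisym[of i j] Z_antisym[of j k] ijk
      by (simp add: power2_eq_square field_simps)
    also have "\<dots> = Q i j + Q j k + Q k i"
      using addition[OF ijk] by (simp add: Q_def field_simps)
    finally show ?thesis .
  qed
  then have "(\<Sum>i\<in>N. \<Sum>j\<in>N. \<Sum>k\<in>N. if i \<noteq> j \<and> j \<noteq> k \<and> k \<noteq> i then s i * s j * s k * Z i j * Z i k else 0) =
      (\<Sum>i\<in>N. \<Sum>j\<in>N. \<Sum>k\<in>N. if i \<noteq> j \<and> j \<noteq> k \<and> k \<noteq> i then s i * s j * s k * Q i j else 0)"
    by (rule sum_distinct_triples_cyclic)
  also have "\<dots> = - 2 * (\<Sum>i\<in>N. \<Sum>j\<in>N. s i * Q i j)"
    using \<open>finite N\<close> s Q by (rule sum_distinct_triples_symmetric)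
  also have "\<dots> = (\<Sum>i\<in>N. \<Sum>j\<in>N. s i * P i j - s i * (Z i j)\<^sup>2)"
    unfolding sum_distrib_left by (intro sum.cong refl) (simp add: Q_def field_simps)
  finally show ?thesis
    using sum_squared_weighted_rows[where N = N and s = s and Z = Z, OF \<open>finite N\<close> s(1) diag(1)]
    by (simp add: sum_distrib_left sum_subtractf)
qed

lemma sum_alternating_row_sums:
  fixes P :: "nat \<Rightarrow> nat \<Rightarrow> 'a :: comm_ring_1"
  assumes diag: "\<And>i. i \<in> {1..m} \<Longrightarrow> P i i = 0"
    and sym: "\<And>i j. i \<in> {1..m} \<Longrightarrow> j \<in> {1..m} \<Longrightarrow> P j i = P i j"
  shows "(\<Sum>i=1..m. (- 1) ^ i * (\<Sum>j=1..m. P i j))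
    = 2 * ((\<Sum>(i, j)\<in>{(i, j). 1 \<le> i \<and> i < j \<and> j \<le> m \<and> even i \<and> even j}. P i j)
         - (\<Sum>(i, j)\<in>{(i, j). 1 \<le> i \<and> i < j \<and> j \<le> m \<and> odd i \<and> odd j}. P i j))"
proof -
  have pairs: "(\<Sum>(i, j)\<in>{(i, j). 1 \<le> i \<and> i < j \<and> j \<le> m \<and> R i j}. P i j) =
      (\<Sum>i=1..m. \<Sum>j=1..m. if i < j \<and> R i j then P i j else 0)" for R
  proof -
    have "{(i, j). 1 \<le> i \<and> i < j \<and> j \<le> m \<and> R i j} = {x \<in> {1..m} \<times> {1..m}. case x of (i, j) \<Rightarrow> i < j \<and> R i j}"
      by auto
    then show ?thesis
      by (simp only:) (subst sum.inter_filter, auto simp: sum.cartesian_product case_prod_unfold intro!: sum.cong)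
  qed
  have signs: "(- 1) ^ i + (- 1) ^ j =
      2 * ((if even i \<and> even j then 1 else 0) - (if odd i \<and> odd j then 1 else 0) :: 'a)" for i j :: nat
    by (cases "even i"; cases "even j") simp_all
  have "(\<Sum>i=1..m. (- 1) ^ i * (\<Sum>j=1..m. P i j)) = (\<Sum>i=1..m. \<Sum>j=1..m. (- 1) ^ i * P i j)"
    by (simp add: sum_distrib_left)
  also have "\<dots> = (\<Sum>i=1..m. \<Sum>j=1..m. if i < j then ((- 1) ^ i + (- 1) ^ j) * P i j else 0)"
    by (rule sum_symmetric_eq_upper_triangle[where s = "\<lambda>i. (- 1) ^ i"]) (use diag sym in auto)
  also have "\<dots> = (\<Sum>i=1..m. \<Sum>j=1..m. 2 * ((if i < j \<and> even i \<and> even j then P i j else 0)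
      - (if i < j \<and> odd i \<and> odd j then P i j else 0)))"
    by (intro sum.cong refl) (auto simp: signs)
  also have "\<dots> = 2 * ((\<Sum>i=1..m. \<Sum>j=1..m. if i < j \<and> even i \<and> even j then P i j else 0)
      - (\<Sum>i=1..m. \<Sum>j=1..m. if i < j \<and> odd i \<and> odd j then P i j else 0))"
    by (simp add: sum_distrib_left sum_subtractf right_diff_distrib)
  finally show ?thesis
    by (simp only: pairs)
qed

lemma sum_alternating_pm_one:
  "(\<Sum>k=1..2 * n. (- 1 :: 'a :: ring_1) ^ k) = 0"
  by (induction n) (simp_all add: atLeastAtMostSuc_conv)

theorem lemma5p5:
  fixes \<omega>1 \<omega>2 :: complex and n :: nat and p :: "nat \<Rightarrow> complex"
  assumes indep: "Im (\<omega>2 / \<omega>1) \<noteq> 0"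
    and n: "n \<ge> 1"
    and distinct: "\<forall>i\<in>{1..2*n}. \<forall>j\<in>{1..2*n}. i \<noteq> j \<longrightarrow> p i - p j \<notin> lattice \<omega>1 \<omega>2"
  shows "(\<Sum>i=1..2*n. (-1) ^ i * wp_i (lattice \<omega>1 \<omega>2) n p i)
           = 2 * ((\<Sum>(i,j)\<in>{(i,j). 1 \<le> i \<and> i < j \<and> j \<le> 2*n \<and> even i \<and> even j}.
                       wp_ij (lattice \<omega>1 \<omega>2) p i j)
                - (\<Sum>(i,j)\<in>{(i,j). 1 \<le> i \<and> i < j \<and> j \<le> 2*n \<and> odd i \<and> odd j}.
                       wp_ij (lattice \<omega>1 \<omega>2) p i j))
       \<and> 2 * ((\<Sum>(i,j)\<in>{(i,j). 1 \<le> i \<and> i < j \<and> j \<le> 2*n \<and> even i \<and> even j}.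
                       wp_ij (lattice \<omega>1 \<omega>2) p i j)
                - (\<Sum>(i,j)\<in>{(i,j). 1 \<le> i \<and> i < j \<and> j \<le> 2*n \<and> odd i \<and> odd j}.
                       wp_ij (lattice \<omega>1 \<omega>2) p i j))
           = (\<Sum>i=1..2*n. (-1) ^ i * (zeta_hat_i (lattice \<omega>1 \<omega>2) n p i)\<^sup>2)"
proof -
  interpret period_lattice \<omega>1 \<omega>2
    using indep by unfold_locales
  have row_sums: "(\<Sum>i=1..2*n. (-1) ^ i * wp_i \<Lambda> n p i)
      = 2 * ((\<Sum>(i,j)\<in>{(i,j). 1 \<le> i \<and> i < j \<and> j \<le> 2*n \<and> even i \<and> even j}. wp_ij \<Lambda> p i j)
           - (\<Sum>(i,j)\<in>{(i,j). 1 \<le> i \<and> i < j \<and> j \<le> 2*n \<and> odd i \<and> odd j}. wp_ij \<Lambda> p i j))"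
    unfolding wp_i_def by (rule sum_alternating_row_sums) (simp add: wp_ij_def, rule wp_ij_sym)
  have "(\<Sum>i=1..2*n. (-1) ^ i * (zeta_hat_i \<Lambda> n p i)\<^sup>2) = (\<Sum>i=1..2*n. (-1) ^ i * wp_i \<Lambda> n p i)"
    unfolding zeta_hat_i_def zeta_hat_ij_def wp_i_def
  proof (rule sum_signed_squares_eq_signed_row_sums)
    show "(\<Sum>i=1..2*n. (-1) ^ i) = (0 :: complex)"
      by (rule sum_alternating_pm_one)
    show "(zeta_ij \<Lambda> p i j + zeta_ij \<Lambda> p j k + zeta_ij \<Lambda> p k i)\<^sup>2 = wp_ij \<Lambda> p i j + wp_ij \<Lambda> p j k + wp_ij \<Lambda> p k i"
      if "i \<in> {1..2*n}" "j \<in> {1..2*n}" "k \<in> {1..2*n}" "i \<noteq> j" "j \<noteq> k" "k \<noteq> i" for i j k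
      using distinct that by (intro zeta_ij_addition) auto
    show "zeta_ij \<Lambda> p j i = - zeta_ij \<Lambda> p i j" "wp_ij \<Lambda> p j i = wp_ij \<Lambda> p i j" for i j
      by (rule zeta_ij_antisym, rule wp_ij_sym)
  qed (auto simp: zeta_ij_def wp_ij_def simp flip: power_add)
  with row_sums show ?thesis
    by simp
qed

end
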